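(* Let $\mathcal S=(\mathcal P,\mathcal L)$ be a linear space with $v$ points, constant line size $k$ with $2<k<v$, and $r$ lines through each point; let $G\le\mathrm{Aut}(\mathcal S)$ be transitive on lines, and let $\mathfrak C$ be a non-trivial $G$-invariant partition of $\mathcal P$. If $\gcd(k,r)\le 8$, then $G$ is $2$-step imprimitive relative to $\mathfrak C$, that is, $\mathfrak C$ is both a minimal and a maximal non-trivial $G$-invariant partition of $\mathcal P$.
   Context: A linear space: a finite set $\mathcal P$ of points and a set $\mathcal L$ of subsets (lines) such that any two distinct points lie on exactly one line and each line has at least two points. A partition is non-trivial if it has more than one class and its classes have more than one element. $\mathfrak C$ is minimal if no non-trivial $G$-invariant partition strictly refines it, and maximal if no non-trivial $G$-invariant partition is strictly coarser than it. *)

theory Defs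
  imports Main "HOL-Library.Disjoint_Sets" "HOL-Combinatorics.Permutations"
begin

definition linear_space :: "'a set \<Rightarrow> 'a set set \<Rightarrow> bool" where
  "linear_space P L \<longleftrightarrow> finite P \<and> (\<forall>l\<in>L. l \<subseteq> P \<and> 2 \<le> card l) \<and>
     (\<forall>x\<in>P. \<forall>y\<in>P. x \<noteq> y \<longrightarrow> (\<exists>!l. l \<in> L \<and> x \<in> l \<and> y \<in> l))"

definition automorphism :: "'a set \<Rightarrow> 'a set set \<Rightarrow> ('a \<Rightarrow> 'a) \<Rightarrow> bool" where
  "automorphism P L g \<longleftrightarrow> g permutes P \<and> (\<lambda>l. g ` l) ` L = L"

definition aut_subgroup :: "'a set \<Rightarrow> 'a set set \<Rightarrow> ('a \<Rightarrow> 'a) set \<Rightarrow> bool" where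
  "aut_subgroup P L G \<longleftrightarrow> (\<forall>g\<in>G. automorphism P L g) \<and> id \<in> G \<and>
     (\<forall>g\<in>G. \<forall>h\<in>G. g \<circ> h \<in> G) \<and> (\<forall>g\<in>G. inv g \<in> G)"

definition line_transitive :: "'a set set \<Rightarrow> ('a \<Rightarrow> 'a) set \<Rightarrow> bool" where
  "line_transitive L G \<longleftrightarrow> (\<forall>l\<in>L. \<forall>m\<in>L. \<exists>g\<in>G. g ` l = m)"

definition G_invariant :: "('a \<Rightarrow> 'a) set \<Rightarrow> 'a set set \<Rightarrow> bool" where
  "G_invariant G C \<longleftrightarrow> (\<forall>g\<in>G. \<forall>c\<in>C. g ` c \<in> C)"

definition nontrivial_partition :: "'a set \<Rightarrow> 'a set set \<Rightarrow> bool" where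
  "nontrivial_partition P C \<longleftrightarrow> partition_on P C \<and> 1 < card C \<and> (\<forall>c\<in>C. 1 < card c)"

definition refines :: "'a set set \<Rightarrow> 'a set set \<Rightarrow> bool" where
  "refines D C \<longleftrightarrow> (\<forall>d\<in>D. \<exists>c\<in>C. d \<subseteq> c)"

definition minimal_partition :: "'a set \<Rightarrow> ('a \<Rightarrow> 'a) set \<Rightarrow> 'a set set \<Rightarrow> bool" where
  "minimal_partition P G C \<longleftrightarrow> \<not> (\<exists>D. nontrivial_partition P D \<and> G_invariant G D \<and>
      refines D C \<and> D \<noteq> C)"

definition maximal_partition :: "'a set \<Rightarrow> ('a \<Rightarrow> 'a) set \<Rightarrow> 'a set set \<Rightarrow> bool" where
  "maximal_partition P G C \<longleftrightarrow> \<not> (\<exists>D. nontrivial_partition P D \<and> G_invariant G D \<and>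
      refines C D \<and> D \<noteq> C)"

definition two_step_imprimitive :: "'a set \<Rightarrow> ('a \<Rightarrow> 'a) set \<Rightarrow> 'a set set \<Rightarrow> bool" where
  "two_step_imprimitive P G C \<longleftrightarrow> minimal_partition P G C \<and> maximal_partition P G C"

end

theory Submission
  imports Defs
begin

(* A line-transitive group is point-transitive (Block's lemma), so all classes of a G-invariant
   partition have the same size c. For a line l, let X be the number of ordered pairs of distinct
   points of l lying in a common class: X is even, independent of l, and double counting gives
   k (c - 1) = r X (Delandtsheer-Doyen).

   If the partition were not 2-step imprimitive, there would be invariant partitions with class
   sizes 1 < c1 < c2 < v, c1 | c2 | v = 1 + r (k - 1), each satisfying this equation. With
   g = gcd k r, k = g k' and r = g r', the numbers c1, c2 / c1 and v / c2 are all congruent to 1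
   modulo r'. Writing them as 1 + r' a, 1 + r' mu, 1 + r' e and putting A = a + mu + r' a mu gives
   g^2 k' = g + A + e + r' A e, while the evenness of the two X's makes k' a, k' A and k' e even.
   As k' <= r', this forces r' a mu e < g^2, and for g <= 8 an exhaustive search finds no
   solution. *)

section \<open>Nested class sizes\<close>

text \<open>The search space of the next lemma, cut down by its bound \<open>r'*a*mu*e < g*g\<close>;
  over int, code_simp evaluates far faster than over nat.\<close>
lemma chain_equation_small_cases:
  "\<forall>g\<in>{1..8::int}. \<forall>r'\<in>{1..g*g}. \<forall>a\<in>{1..(g*g - 1) div r'}.
     \<forall>mu\<in>{1..(g*g - 1) div (r'*a)}. \<forall>e\<in>{1..(g*g - 1) div (r'*a*mu)}. \<forall>k'\<in>{0..r'}.
     let A = a + mu + r'*a*mu in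
     g*g*k' = g + A + e + r'*A*e \<longrightarrow>
     even k' \<and> even r' \<or> odd (k'*a) \<or> odd (k'*A) \<or> odd (k'*e)"
  unfolding set_upto[symmetric] by code_simp

lemma of_nat_le_div_of_mult_le:
  fixes x y n :: nat
  assumes "0 < y" "y * x \<le> n"
  shows "int x \<le> int n div int y"
  using assms by (simp add: zdiv_int[symmetric] less_eq_div_iff_mult_less_eq mult.commute)

lemma chain_equation_unsolvable:
  fixes g k' r' a mu e :: nat
  defines "A \<equiv> a + mu + r'*a*mu"
  assumes g: "0 < g" "g \<le> 8" and pos: "0 < a" "0 < mu" "0 < e"
    and k'_le: "k' \<le> r'" and not_both_even: "\<not> (even k' \<and> even r')"
    and eq: "g*g*k' = g + A + e + r'*A*e"
    and parity: "even (k'*a)" "even (k'*A)" "even (k'*e)"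
  shows False
proof -
  have "k' \<noteq> 0" using eq g by (intro notI) simp
  then have r': "0 < r'" using k'_le by simp
  have "r' * (r'*a*mu*e) \<le> r'*A*e" by (simp add: A_def algebra_simps)
  also have "\<dots> < g*g*k'" using eq g by simp
  also have "\<dots> \<le> r' * (g*g)" using k'_le by simp
  finally have "r'*a*mu*e < g*g" using r' by simp
  then have bound: "r'*a*mu*e \<le> g*g - 1" by arith
  have "r'*a*1 \<le> r'*a*(mu*e)" "r'*a*mu*1 \<le> r'*a*mu*e" "r'*1 \<le> r'*(a*mu*e)"
    using pos by (intro mult_le_mono; simp)+
  then have r'_le: "r' \<le> g*g" and "r'*a \<le> g*g - 1" "r'*a*mu \<le> g*g - 1"
    using bound unfolding mult_1_right mult.assoc by linarith+
  then have "int a \<le> int (g*g - 1) div int r'"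
    "int mu \<le> int (g*g - 1) div int (r'*a)"
    "int e \<le> int (g*g - 1) div int (r'*a*mu)"
    using bound pos r' by (intro of_nat_le_div_of_mult_le; simp)+
  moreover have "int r' \<le> int g * int g"
    using r'_le by (metis of_nat_le_iff of_nat_mult)
  ultimately have "int g \<in> {1..8}" "int r' \<in> {1..int g * int g}"
    "int a \<in> {1..(int g * int g - 1) div int r'}"
    "int mu \<in> {1..(int g * int g - 1) div (int r' * int a)}"
    "int e \<in> {1..(int g * int g - 1) div (int r' * int a * int mu)}"
    "int k' \<in> {0..int r'}"
    using g pos r' k'_le by simp_all
  then have
    "let A = int a + int mu + int r' * int a * int mu in
     int g * int g * int k' = int g + A + int e + int r' * A * int e \<longrightarrow>
     even (int k') \<and> even (int r') \<or>
     odd (int k' * int a) \<or> odd (int k' * A) \<or> odd (int k' * int e)"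
    using chain_equation_small_cases by blast
  then have "g*g*k' = g + A + e + r'*A*e \<longrightarrow>
      even k' \<and> even r' \<or> odd (k'*a) \<or> odd (k'*A) \<or> odd (k'*e)"
    unfolding A_def Let_def
    by (simp only: of_nat_mult[symmetric] of_nat_add[symmetric] of_nat_eq_iff even_of_nat)
  then show False
    using eq parity not_both_even by blast
qed

lemma coprime_crossmult_obtain:
  fixes p q x y :: nat
  assumes "coprime p q" "p * x = q * y" "0 < q"
  obtains t where "x = q * t" "y = p * t"
proof -
  have "q dvd p * x" using assms(2) by simp
  then have "q dvd x" using assms(1) by (simp add: coprime_commute coprime_dvd_mult_right_iff)
  then obtain t where x: "x = q * t" by blast
  then have "q * (p * t) = q * y" using assms(2) by (simp add: ac_simps)
  then show thesis using that x assms(3) by simp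
qed

lemma one_plus_multiple_cofactor:
  fixes n s u y :: nat
  assumes "(1 + n*s) * y = 1 + n*u"
  obtains t where "y = 1 + n*t"
proof -
  have "y \<noteq> 0" using assms by (intro notI) simp
  then have "(y - 1) + n*(s*y) = n*u" using assms by (simp add: algebra_simps)
  then have "n dvd y - 1" by (metis dvd_add_left_iff dvd_triv_left)
  then obtain t where "y - 1 = n*t" by blast
  then have "y = 1 + n*t" using \<open>y \<noteq> 0\<close> by simp
  then show thesis by (rule that)
qed

lemma divisor_chain_one_mod:
  fixes n a A w c1 c2 :: nat
  assumes "0 < n" "c1 = 1 + n*a" "c2 = 1 + n*A" "c1 dvd c2" "c2 dvd 1 + n*w"
  obtains mu e where "c2 = c1 * (1 + n*mu)" "1 + n*w = c2 * (1 + n*e)"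
    "A = a + mu + n*a*mu" "w = A + e + n*A*e"
proof -
  obtain m where m: "c2 = c1*m" using assms(4) by blast
  obtain d where d: "1 + n*w = c2*d" using assms(5) by blast
  obtain mu where mu: "m = 1 + n*mu"
    using one_plus_multiple_cofactor[of n a m A] m assms(2,3) by metis
  obtain e where e: "d = 1 + n*e"
    using one_plus_multiple_cofactor[of n A d w] d assms(3) by metis
  have "n * A = n * (a + mu + n*a*mu)" using m mu assms(2,3) by (simp add: algebra_simps)
  then have A: "A = a + mu + n*a*mu" using assms(1) by simp
  have "n * w = n * (A + e + n*A*e)" using d e assms(3) by (simp add: algebra_simps)
  then have w: "w = A + e + n*A*e" using assms(1) by simp
  show thesis by (rule that[OF _ _ A w]) (use m mu d e in simp_all)
qed

lemma no_nested_class_sizes: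
  fixes k r c1 c2 X1 X2 :: nat
  assumes k: "2 < k" "k \<le> r" and gcd: "gcd k r \<le> 8"
    and c1: "1 < c1" and c12: "c1 dvd c2" "c1 < c2"
    and c2: "c2 dvd 1 + r*(k - 1)" "c2 < 1 + r*(k - 1)"
    and X: "k*(c1 - 1) = r*X1" "k*(c2 - 1) = r*X2" and even_X: "even X1" "even X2"
  shows False
proof -
  define g where "g = gcd k r"
  have g: "0 < g" "g \<le> 8" using k gcd by (simp_all add: g_def)
  obtain k' r' where kr: "k = k'*g" "r = r'*g" and cop: "coprime k' r'"
    using gcd_coprime_exists[of k r] g unfolding g_def by auto
  have "0 < k'" using k(1) kr(1) by (cases k') auto
  moreover have "k' \<le> r'" using k kr g by simp
  ultimately have r': "0 < r'" by simp
  have "k'*(c1 - 1) = r'*X1" "k'*(c2 - 1) = r'*X2"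
    using X kr g by (simp_all add: ac_simps)
  then obtain a A where a: "c1 - 1 = r'*a" "X1 = k'*a" and A: "c2 - 1 = r'*A" "X2 = k'*A"
    using coprime_crossmult_obtain[OF cop _ r'] by metis
  have v: "1 + r*(k - 1) = 1 + r'*(g*(k - 1))" using kr by simp
  have c_eq: "c1 = 1 + r'*a" "c2 = 1 + r'*A" using a A c1 c12 by simp_all
  then obtain mu e where chain: "c2 = c1 * (1 + r'*mu)" "1 + r*(k - 1) = c2 * (1 + r'*e)"
    and A_eq: "A = a + mu + r'*a*mu" and v_eq: "g*(k - 1) = A + e + r'*A*e"
    using divisor_chain_one_mod[OF r' _ _ c12(1) c2(1)[unfolded v]] unfolding v by blast
  have pos: "0 < a" "0 < mu" "0 < e" using c1 c_eq(1) c12 c2 chain by auto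
  have "g*g*k' = g*k" using kr by simp
  also have "\<dots> = g + g*(k - 1)" using k by (cases k) simp_all
  finally have eq: "g*g*k' = g + A + e + r'*A*e" using v_eq by simp
  have "k*(k - 1) = k'*(g*(k - 1))" using kr by (simp add: ac_simps)
  also have "\<dots> = k'*A*(1 + r'*e) + k'*e" unfolding v_eq by (simp add: algebra_simps)
  finally have kk: "k*(k - 1) = k'*A*(1 + r'*e) + k'*e" .
  have "even (k*(k - 1))" "even (k'*A*(1 + r'*e))" using A even_X by auto
  then have "even (k'*e)" unfolding kk by (simp only: even_add)
  moreover have "\<not> (even k' \<and> even r')" using cop by (auto dest: coprime_common_divisor)
  ultimately show False
    using chain_equation_unsolvable[OF g pos \<open>k' \<le> r'\<close>] eq even_X a A A_eq by blast
qed

section \<open>Uniform partitions\<close>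

lemma card_uniform_partition:
  assumes "finite A" "partition_on A P" "\<And>p. p \<in> P \<Longrightarrow> card p = c"
  shows "card A = c * card P"
  using card_partition[of P c] assms finite_elements[OF assms(1,2)] partition_onD1[OF assms(2)]
    partition_onD2[OF assms(2)] by (auto simp: disjoint_def)

lemma card_refining_class:
  assumes "Disjoint_Sets.refines A P Q" "finite A" "\<And>p. p \<in> P \<Longrightarrow> card p = c" "q \<in> Q"
  shows "card q = c * card {p\<in>P. p \<subseteq> q}"
proof (rule card_uniform_partition)
  show "finite q"
    using assms(1,2,4)
    by (auto simp: Disjoint_Sets.refines_def partition_on_def intro: finite_subset)
  show "partition_on q {p\<in>P. p \<subseteq> q}" using assms(1,4) by (rule refines_obtains_subset)
qed (use assms(3) in simp)

lemma card_strictly_refining_class: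
  assumes ref: "Disjoint_Sets.refines A P Q" "P \<noteq> Q" and "finite A"
    and c: "\<And>p. p \<in> P \<Longrightarrow> card p = c" and d: "\<And>q. q \<in> Q \<Longrightarrow> card q = d"
  shows "c dvd d" "c < d"
proof -
  have "Q \<noteq> {}"
    using ref by (auto simp: Disjoint_Sets.refines_def partition_on_def)
  then obtain q0 where "q0 \<in> Q" by blast
  have fin: "finite q" "q \<noteq> {}" if "q \<in> Q" for q
    using ref \<open>finite A\<close> that
    by (auto simp: Disjoint_Sets.refines_def partition_on_def intro: finite_subset)
  have card_q: "d = c * card {p\<in>P. p \<subseteq> q}" if "q \<in> Q" for q
    using card_refining_class[OF ref(1) \<open>finite A\<close> c that] d[OF that] by simp
  then show "c dvd d" using \<open>q0 \<in> Q\<close> by simp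
  have "0 < d" using d fin \<open>q0 \<in> Q\<close> by fastforce
  then have "c \<le> d" using card_q[OF \<open>q0 \<in> Q\<close>] by (simp add: dvd_imp_le)
  moreover have "c \<noteq> d"
  proof
    assume "c = d"
    have "q \<in> P" if "q \<in> Q" for q
    proof -
      have "card {p\<in>P. p \<subseteq> q} = 1" using card_q[OF that] \<open>c = d\<close> \<open>0 < d\<close> by simp
      then obtain p where p: "{p\<in>P. p \<subseteq> q} = {p}" by (rule card_1_singletonE)
      then have "q = p" using partition_onD1[OF refines_obtains_subset[OF ref(1) that]] by simp
      then show "q \<in> P" using p by blast
    qed
    then have "Disjoint_Sets.refines A Q P"
      using ref(1) by (auto simp: Disjoint_Sets.refines_def)
    then show False using ref refines_asym by blast
  qed
  ultimately show "c < d" by simp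
qed

definition inner_pairs :: "'a set set \<Rightarrow> 'a set \<Rightarrow> nat" where
  "inner_pairs C l = (\<Sum>D\<in>C. card (l \<inter> D) * (card (l \<inter> D) - 1))"

lemma even_inner_pairs: "even (inner_pairs C l)"
  unfolding inner_pairs_def by (intro dvd_sum) auto

section \<open>Linear spaces with constant line size and point degree\<close>

locale regular_linear_space =
  fixes P :: "'a set" and L :: "'a set set" and k r :: nat
  assumes linear_space: "linear_space P L"
    and card_line: "\<And>l. l \<in> L \<Longrightarrow> card l = k"
    and card_lines_through: "\<And>x. x \<in> P \<Longrightarrow> card {l\<in>L. x \<in> l} = r"
begin

lemma finite_points: "finite P"
  using linear_space by (simp add: linear_space_def)

lemma line_subset: "l \<in> L \<Longrightarrow> l \<subseteq> P"
  using linear_space by (simp add: linear_space_def)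

lemma finite_lines: "finite L"
  using finite_subset[OF _ finite_Pow_iff[THEN iffD2, OF finite_points]] line_subset by blast

lemma finite_line: "l \<in> L \<Longrightarrow> finite l"
  using finite_subset[OF line_subset finite_points] .

lemma line_through:
  assumes "x \<in> P" "y \<in> P" "x \<noteq> y"
  obtains l where "l \<in> L" "x \<in> l" "y \<in> l"
  using assms linear_space unfolding linear_space_def by blast

lemma line_unique:
  assumes "l \<in> L" "m \<in> L" "x \<in> l" "y \<in> l" "x \<in> m" "y \<in> m" "x \<noteq> y"
  shows "l = m"
  using assms line_subset linear_space unfolding linear_space_def by blast

lemma card_Int_lines_le_1:
  assumes "l \<in> L" "m \<in> L" "l \<noteq> m"
  shows "card (l \<inter> m) \<le> 1"
proof -
  have "finite (l \<inter> m)" using assms finite_line by blast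
  moreover have "\<forall>x\<in>l \<inter> m. \<forall>y\<in>l \<inter> m. x = y" using assms line_unique by blast
  ultimately show ?thesis by (simp add: card_le_Suc0_iff_eq)
qed

text \<open>Each point of T other than \<alpha> lies on exactly one line through \<alpha>.\<close>
lemma card_eq_sum_lines_through:
  assumes "\<alpha> \<in> T" "T \<subseteq> P"
  shows "card T - 1 = (\<Sum>l\<in>{l\<in>L. \<alpha> \<in> l}. card (l \<inter> T) - 1)"
proof -
  let ?I = "{l\<in>L. \<alpha> \<in> l}"
  have "card (T - {\<alpha>}) = card (\<Union>l\<in>?I. l \<inter> T - {\<alpha>})"
  proof (intro arg_cong[where f = card] equalityI subsetI)
    fix y assume y: "y \<in> T - {\<alpha>}"
    then obtain l where "l \<in> L" "\<alpha> \<in> l" "y \<in> l"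
      using assms line_through[of \<alpha> y] by blast
    then show "y \<in> (\<Union>l\<in>?I. l \<inter> T - {\<alpha>})" using y by blast
  qed blast
  also have "\<dots> = (\<Sum>l\<in>?I. card (l \<inter> T - {\<alpha>}))"
  proof (rule card_UN_disjoint)
    show "finite ?I" using finite_lines by simp
    show "\<forall>l\<in>?I. finite (l \<inter> T - {\<alpha>})" using finite_line by blast
    show "\<forall>l\<in>?I. \<forall>m\<in>?I. l \<noteq> m \<longrightarrow> (l \<inter> T - {\<alpha>}) \<inter> (m \<inter> T - {\<alpha>}) = {}"
      using line_unique[of _ _ \<alpha>] by blast
  qed
  also have "\<dots> = (\<Sum>l\<in>?I. card (l \<inter> T) - 1)"
    using assms finite_line by (intro sum.cong) auto
  finally show ?thesis using assms by simp
qed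

lemma sum_lines_through_swap:
  assumes "D \<subseteq> P"
  shows "(\<Sum>x\<in>D. \<Sum>l\<in>{l\<in>L. x \<in> l}. h l) = (\<Sum>l\<in>L. card (l \<inter> D) * h l)"
proof -
  have "(\<Sum>x\<in>D. \<Sum>l\<in>{l\<in>L. x \<in> l}. h l) = (\<Sum>x\<in>D. \<Sum>l\<in>L. if x \<in> l then h l else 0)"
    using finite_lines by (simp add: sum.inter_filter)
  also have "\<dots> = (\<Sum>l\<in>L. \<Sum>x\<in>D. if x \<in> l then h l else 0)"
    by (rule sum.swap)
  also have "\<dots> = (\<Sum>l\<in>L. card (l \<inter> D) * h l)"
    using finite_subset[OF assms finite_points]
    by (simp add: sum.inter_restrict[symmetric] Int_commute)
  finally show ?thesis .
qed

lemma lines_nonempty: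
  assumes "2 \<le> card P"
  shows "L \<noteq> {}"
proof -
  obtain x y where "x \<in> P" "y \<in> P" "x \<noteq> y"
    using assms finite_points card_le_Suc0_iff_eq[of P] by (auto simp: not_le[symmetric])
  then show ?thesis using line_through by blast
qed

lemma card_points:
  assumes "P \<noteq> {}"
  shows "card P = 1 + r * (k - 1)"
proof -
  obtain \<alpha> where \<alpha>: "\<alpha> \<in> P" using assms by blast
  have "card P - 1 = (\<Sum>l\<in>{l\<in>L. \<alpha> \<in> l}. card (l \<inter> P) - 1)"
    using card_eq_sum_lines_through[OF \<alpha>] by simp
  also have "\<dots> = (\<Sum>l\<in>{l\<in>L. \<alpha> \<in> l}. k - 1)"
    using line_subset card_line by (intro sum.cong) (auto simp: Int_absorb2)
  also have "\<dots> = r * (k - 1)" using card_lines_through[OF \<alpha>] by simp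
  finally have "card P - 1 = r * (k - 1)" .
  moreover have "0 < card P" using \<alpha> finite_points card_gt_0_iff by blast
  ultimately show ?thesis by linarith
qed

text \<open>Through a point \<alpha> off a line l, every point of l spans its own line with \<alpha>.\<close>
lemma line_size_le_degree:
  assumes "L \<noteq> {}" "k < card P"
  shows "k \<le> r"
proof -
  obtain l where l: "l \<in> L" using assms by blast
  have "\<not> P \<subseteq> l"
  proof
    assume "P \<subseteq> l"
    then have "card P \<le> card l" by (rule card_mono[OF finite_line[OF l]])
    then show False using assms(2) card_line[OF l] by simp
  qed
  then obtain \<alpha> where \<alpha>: "\<alpha> \<in> P" "\<alpha> \<notin> l" by blast
  let ?I = "{m\<in>L. \<alpha> \<in> m}"
  have "k = card (insert \<alpha> l) - 1" using \<alpha> finite_line[OF l] card_line[OF l] by simp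
  also have "\<dots> = (\<Sum>m\<in>?I. card (m \<inter> insert \<alpha> l) - 1)"
    using \<alpha> line_subset[OF l] by (intro card_eq_sum_lines_through) auto
  also have "\<dots> = (\<Sum>m\<in>?I. card (m \<inter> l))"
  proof (rule sum.cong[OF refl])
    fix m assume "m \<in> ?I"
    then have "m \<inter> insert \<alpha> l = insert \<alpha> (m \<inter> l)" "\<alpha> \<notin> m \<inter> l" using \<alpha> by auto
    then show "card (m \<inter> insert \<alpha> l) - 1 = card (m \<inter> l)"
      using finite_line[OF l] by simp
  qed
  also have "\<dots> \<le> (\<Sum>m\<in>?I. 1)"
  proof (rule sum_mono)
    fix m assume "m \<in> ?I"
    then show "card (m \<inter> l) \<le> 1" using \<alpha> l by (intro card_Int_lines_le_1) auto
  qed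
  also have "\<dots> = r" using card_lines_through[OF \<alpha>(1)] by simp
  finally show ?thesis .
qed

lemma card_points_mult_degree:
  "card P * r = card L * k"
proof -
  have "(\<Sum>x\<in>P. \<Sum>l\<in>{l\<in>L. x \<in> l}. 1) = (\<Sum>l\<in>L. card (l \<inter> P) * 1)"
    by (rule sum_lines_through_swap) simp
  then show ?thesis
    using card_lines_through card_line line_subset by (simp add: Int_absorb2)
qed

lemma sum_inner_pairs:
  assumes "partition_on P C"
  shows "(\<Sum>l\<in>L. inner_pairs C l) = (\<Sum>D\<in>C. card D * (card D - 1))"
proof -
  have "(\<Sum>l\<in>L. inner_pairs C l) = (\<Sum>D\<in>C. \<Sum>l\<in>L. card (l \<inter> D) * (card (l \<inter> D) - 1))"
    unfolding inner_pairs_def by (rule sum.swap)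
  also have "\<dots> = (\<Sum>D\<in>C. card D * (card D - 1))"
  proof (rule sum.cong)
    fix D assume "D \<in> C"
    then have DP: "D \<subseteq> P" using assms partition_onD1 by blast
    have "(\<Sum>l\<in>L. card (l \<inter> D) * (card (l \<inter> D) - 1))
        = (\<Sum>x\<in>D. \<Sum>l\<in>{l\<in>L. x \<in> l}. card (l \<inter> D) - 1)"
      by (rule sum_lines_through_swap[OF DP, symmetric])
    also have "\<dots> = (\<Sum>x\<in>D. card D - 1)"
      using card_eq_sum_lines_through[OF _ DP] by (intro sum.cong) simp_all
    finally show "(\<Sum>l\<in>L. card (l \<inter> D) * (card (l \<inter> D) - 1)) = card D * (card D - 1)"
      by simp
  qed simp
  finally show ?thesis .
qed

end

section \<open>Line-transitive automorphism groups\<close>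

locale line_transitive_space = regular_linear_space P L k r
  for P :: "'a set" and L k r +
  fixes G :: "('a \<Rightarrow> 'a) set"
  assumes aut_subgroup: "aut_subgroup P L G"
    and line_transitive: "line_transitive L G"
begin

lemma permutes_points: "g \<in> G \<Longrightarrow> g permutes P"
  using aut_subgroup by (simp add: aut_subgroup_def automorphism_def)

lemma inj_group: "g \<in> G \<Longrightarrow> inj g"
  using permutes_inj[OF permutes_points] .

lemma card_image_group: "g \<in> G \<Longrightarrow> card (g ` A) = card A"
  using card_image[OF inj_on_subset[OF inj_group subset_UNIV]] .

lemma card_Int_line_invariant:
  assumes "\<forall>g\<in>G. g ` T = T" "l \<in> L" "m \<in> L"
  shows "card (m \<inter> T) = card (l \<inter> T)"
proof -
  obtain g where g: "g \<in> G" "g ` l = m"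
    using line_transitive assms(2,3) unfolding line_transitive_def by blast
  then have "m \<inter> T = g ` l \<inter> g ` T" using assms(1) by simp
  also have "\<dots> = g ` (l \<inter> T)" by (rule image_Int[OF inj_group[OF g(1)], symmetric])
  finally show ?thesis using card_image_group[OF g(1)] by simp
qed

lemma card_invariant_subset:
  assumes "T \<subseteq> P" "\<forall>g\<in>G. g ` T = T" "x \<in> T" "l \<in> L" "0 < r"
  shows "card T = 1 + r * (card (l \<inter> T) - 1)" "0 < card (l \<inter> T)"
proof -
  have x: "x \<in> P" using assms(1,3) by blast
  have "card T - 1 = (\<Sum>m\<in>{m\<in>L. x \<in> m}. card (m \<inter> T) - 1)"
    using card_eq_sum_lines_through[OF assms(3,1)] .
  also have "\<dots> = r * (card (l \<inter> T) - 1)"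
    using card_Int_line_invariant[OF assms(2,4)] card_lines_through[OF x] by simp
  finally have card_T: "card T - 1 = r * (card (l \<inter> T) - 1)" .
  have "{m\<in>L. x \<in> m} \<noteq> {}" using card_lines_through[OF x] assms(5) by (intro notI) simp
  then obtain m where m: "m \<in> L" "x \<in> m" by blast
  then have "0 < card (m \<inter> T)" using assms(3) finite_line by (auto simp: card_gt_0_iff)
  then show "0 < card (l \<inter> T)" using card_Int_line_invariant[OF assms(2) m(1) assms(4)] by simp
  have "0 < card T" using assms(3) finite_subset[OF assms(1) finite_points] card_gt_0_iff by blast
  then show "card T = 1 + r * (card (l \<inter> T) - 1)" using card_T by linarith
qed

text \<open>Block's lemma: comparing the counts for T and its complement forces r = 1.\<close>
lemma invariant_subset_eq_points:
  assumes "1 < r" "T \<subseteq> P" "T \<noteq> {}" "\<forall>g\<in>G. g ` T \<subseteq> T"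
  shows "T = P"
proof (rule ccontr)
  assume "T \<noteq> P"
  define Q where "Q = P - T"
  have "Q \<subseteq> P" "Q \<noteq> {}" using \<open>T \<noteq> P\<close> assms(2) by (auto simp: Q_def)
  have fin: "finite T" using assms(2) finite_points finite_subset by blast
  have inv_T: "\<forall>g\<in>G. g ` T = T"
    using assms(4) endo_inj_surj[OF fin] inj_on_subset[OF inj_group subset_UNIV] by blast
  have inv_Q: "\<forall>g\<in>G. g ` Q = Q"
    using inv_T permutes_image[OF permutes_points] image_set_diff[OF inj_group] by (simp add: Q_def)
  obtain x y where "x \<in> T" "y \<in> Q" using assms(3) \<open>Q \<noteq> {}\<close> by blast
  then obtain l where l: "l \<in> L"
    using assms(2) \<open>Q \<subseteq> P\<close> line_through[of x y] by (auto simp: Q_def)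
  obtain t q where
    T: "card T = 1 + r * t" "card (l \<inter> T) = Suc t" and
    Q: "card Q = 1 + r * q" "card (l \<inter> Q) = Suc q"
    using card_invariant_subset[OF assms(2) inv_T \<open>x \<in> T\<close> l]
      card_invariant_subset[OF \<open>Q \<subseteq> P\<close> inv_Q \<open>y \<in> Q\<close> l] assms(1)
    by (metis Suc_pred' less_trans zero_less_one)
  have "card l = card (l \<inter> T) + card (l \<inter> Q)"
    using line_subset[OF l] finite_line[OF l]
    by (subst card_Un_disjoint[symmetric]) (auto simp: Q_def intro: arg_cong[where f = card])
  then have "k = Suc (Suc (t + q))" using T Q card_line[OF l] by simp
  moreover have "card P = card T + card Q"
    using assms(2) fin card_mono[OF finite_points assms(2)] by (simp add: Q_def card_Diff_subset)
  moreover have "card P = 1 + r * (k - 1)" using assms(3,2) card_points by blast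
  ultimately have "r * Suc (t + q) = 1 + r * (t + q)" using T Q by (simp add: algebra_simps)
  then show False using assms(1) by simp
qed

lemma point_transitive:
  assumes "1 < r" "x \<in> P" "y \<in> P"
  obtains g where "g \<in> G" "g x = y"
proof -
  define orb where "orb = (\<lambda>g. g x) ` G"
  have id: "id \<in> G" and comp: "\<And>g h. g \<in> G \<Longrightarrow> h \<in> G \<Longrightarrow> g \<circ> h \<in> G"
    using aut_subgroup by (simp_all add: aut_subgroup_def)
  have "orb \<subseteq> P"
    using assms(2) permutes_in_image[OF permutes_points] by (auto simp: orb_def)
  moreover have "orb \<noteq> {}" using id by (auto simp: orb_def)
  moreover have "\<forall>g\<in>G. g ` orb \<subseteq> orb"
  proof (intro ballI subsetI)
    fix g z assume "g \<in> G" "z \<in> g ` orb"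
    then obtain h where h: "h \<in> G" "z = (g \<circ> h) x" by (auto simp: orb_def)
    have "g \<circ> h \<in> G" using comp \<open>g \<in> G\<close> h(1) .
    then show "z \<in> orb" unfolding orb_def by (rule rev_image_eqI) (use h(2) in simp)
  qed
  ultimately have "orb = P" by (rule invariant_subset_eq_points[OF assms(1)])
  then show thesis using assms(3) that by (auto simp: orb_def)
qed

lemma card_classes_eq:
  assumes "1 < r" "partition_on P C" "G_invariant G C" "D \<in> C" "E \<in> C"
  shows "card E = card D"
proof -
  have "D \<noteq> {}" "E \<noteq> {}" using assms(2,4,5) partition_onD3 by blast+
  then obtain x y where "x \<in> D" "y \<in> E" by blast
  moreover have "D \<subseteq> P" "E \<subseteq> P" using assms(2,4,5) partition_onD1 by blast+
  ultimately obtain g where g: "g \<in> G" "g x = y"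
    using point_transitive[OF assms(1)] by blast
  have "g ` D \<in> C" using assms(3,4) g(1) by (simp add: G_invariant_def)
  moreover have "y \<in> g ` D" using \<open>x \<in> D\<close> g(2) by blast
  ultimately have "g ` D = E"
    using assms(2,5) \<open>y \<in> E\<close> partition_onD2 unfolding disjoint_def by blast
  then show ?thesis using card_image_group[OF g(1), of D] by simp
qed

lemma inner_pairs_image:
  assumes "partition_on P C" "G_invariant G C" "g \<in> G"
  shows "inner_pairs C (g ` l) = inner_pairs C l"
proof -
  have "finite C" using finite_elements[OF finite_points assms(1)] .
  moreover have "(`) g ` C \<subseteq> C" using assms(2,3) by (auto simp: G_invariant_def)
  moreover have "inj_on ((`) g) C"
    using inj_group[OF assms(3)] by (simp add: inj_on_def inj_image_eq_iff)
  ultimately have "bij_betw ((`) g) C C" by (simp add: bij_betw_def endo_inj_surj)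
  then have "inner_pairs C (g ` l) = (\<Sum>D\<in>C. card (g ` l \<inter> g ` D) * (card (g ` l \<inter> g ` D) - 1))"
    unfolding inner_pairs_def by (rule sum.reindex_bij_betw[symmetric])
  also have "\<dots> = inner_pairs C l"
    unfolding inner_pairs_def image_Int[OF inj_group[OF assms(3)], symmetric]
      card_image_group[OF assms(3)] ..
  finally show ?thesis .
qed

lemma inner_pairs_const:
  assumes "partition_on P C" "G_invariant G C" "l \<in> L" "m \<in> L"
  shows "inner_pairs C m = inner_pairs C l"
proof -
  obtain g where "g \<in> G" "g ` l = m"
    using line_transitive assms(3,4) unfolding line_transitive_def by blast
  then show ?thesis using inner_pairs_image[OF assms(1,2)] by blast
qed

lemma class_size_equation:
  assumes "partition_on P C" "G_invariant G C" "\<And>D. D \<in> C \<Longrightarrow> card D = c" "l \<in> L" "P \<noteq> {}"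
  shows "k * (c - 1) = r * inner_pairs C l"
proof -
  have "card L * inner_pairs C l = (\<Sum>m\<in>L. inner_pairs C m)"
    using inner_pairs_const[OF assms(1,2,4)] by simp
  also have "\<dots> = (\<Sum>D\<in>C. card D * (card D - 1))" by (rule sum_inner_pairs[OF assms(1)])
  also have "\<dots> = c * card C * (c - 1)" using assms(3) by simp
  also have "\<dots> = card P * (c - 1)"
    using card_uniform_partition[OF finite_points assms(1,3)] by simp
  finally have pairs: "card L * inner_pairs C l = card P * (c - 1)" .
  have "card P * (k * (c - 1)) = card L * k * inner_pairs C l"
    using pairs by (simp add: ac_simps)
  also have "\<dots> = card P * (r * inner_pairs C l)"
    using card_points_mult_degree by (simp add: ac_simps)
  finally show ?thesis using assms(5) finite_points by simp
qed

lemma invariant_partitions_not_nested: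
  assumes k: "2 < k" "k < card P" and gcd: "gcd k r \<le> 8"
    and C1: "nontrivial_partition P C1" "G_invariant G C1"
    and C2: "nontrivial_partition P C2" "G_invariant G C2"
    and ref: "Defs.refines C1 C2" "C1 \<noteq> C2"
  shows False
proof -
  have p1: "partition_on P C1" "1 < card C1" "\<And>D. D \<in> C1 \<Longrightarrow> 1 < card D"
    and p2: "partition_on P C2" "1 < card C2" "\<And>D. D \<in> C2 \<Longrightarrow> 1 < card D"
    using C1(1) C2(1) by (auto simp: nontrivial_partition_def)
  have "P \<noteq> {}" "L \<noteq> {}" using k lines_nonempty by auto
  then have kr: "k \<le> r" using k line_size_le_degree by blast
  obtain l where l: "l \<in> L" using \<open>L \<noteq> {}\<close> by blast
  obtain D1 D2 where D: "D1 \<in> C1" "D2 \<in> C2" using p1(2) p2(2) by fastforce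
  define c1 c2 where "c1 = card D1" and "c2 = card D2"
  have u1: "card D = c1" if "D \<in> C1" for D
    unfolding c1_def using card_classes_eq[OF _ p1(1) C1(2) D(1) that] k kr by simp
  have u2: "card D = c2" if "D \<in> C2" for D
    unfolding c2_def using card_classes_eq[OF _ p2(1) C2(2) D(2) that] k kr by simp
  have "Disjoint_Sets.refines P C1 C2"
    using p1(1) p2(1) ref(1) by (simp add: Disjoint_Sets.refines_def Defs.refines_def)
  then have c12: "c1 dvd c2" "c1 < c2"
    using card_strictly_refining_class[OF _ ref(2) finite_points u1 u2] by blast+
  have v: "card P = c2 * card C2" by (rule card_uniform_partition[OF finite_points p2(1) u2])
  then have "c2 < card P" using p2(2) c12 by simp
  show False
  proof (rule no_nested_class_sizes)
    show "2 < k" "k \<le> r" "gcd k r \<le> 8" by (fact k(1) kr gcd)+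
    show "1 < c1" using p1(3) D(1) u1 by blast
    show "c1 dvd c2" "c1 < c2" by (fact c12)+
    show "c2 dvd 1 + r * (k - 1)" "c2 < 1 + r * (k - 1)"
      using v \<open>c2 < card P\<close> card_points[OF \<open>P \<noteq> {}\<close>] by simp_all
    show "k * (c1 - 1) = r * inner_pairs C1 l" "k * (c2 - 1) = r * inner_pairs C2 l"
      using class_size_equation[OF p1(1) C1(2) u1 l] class_size_equation[OF p2(1) C2(2) u2 l]
        \<open>P \<noteq> {}\<close> by simp_all
    show "even (inner_pairs C1 l)" "even (inner_pairs C2 l)" by (fact even_inner_pairs)+
  qed
qed

end

theorem theorem4p11:
  fixes P :: "'a set" and L :: "'a set set" and G :: "('a \<Rightarrow> 'a) set"
    and C :: "'a set set" and k r :: nat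
  assumes "linear_space P L"
    and "\<forall>l\<in>L. card l = k"
    and "2 < k" and "k < card P"
    and "\<forall>x\<in>P. card {l\<in>L. x \<in> l} = r"
    and "aut_subgroup P L G"
    and "line_transitive L G"
    and "nontrivial_partition P C"
    and "G_invariant G C"
    and "gcd k r \<le> 8"
  shows "two_step_imprimitive P G C"
proof -
  interpret line_transitive_space P L k r G
    using assms by unfold_locales auto
  show ?thesis
    unfolding two_step_imprimitive_def minimal_partition_def maximal_partition_def
    using invariant_partitions_not_nested[OF assms(3,4,10)] assms(8,9) by metis
qed

end
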